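(* Let $\mathcal{A}$ be an $[n_a,k_a]_q$ cyclic code and let $\mathcal{B}$ be an $[n_b,n_b-1]_q$ single parity check code (minimum distance $d_b=2$), with $\gcd(n_a,n_b)=1$. Let $\alpha$ be an element of order $n_a$ in $\mathbb{F}_{q^{s_a}}$, $\beta$ an element of order $n_b$ in $\mathbb{F}_{q^{s_b}}$, $s=\mathrm{lcm}(s_a,s_b)$, and let $f_1,f_2,m_1,m_2,\delta,\nu$ be integers with $m_1\neq0$, $m_2\neq0$, $\gcd(n_a,m_1)=\gcd(n_b,m_2)=1$, $\delta\ge 2$, $\nu>0$, such that $$\sum_{i=0}^{\infty} a(\alpha^{f_1+im_1+j})\, b(\beta^{f_2+im_2+j})X^i\equiv 0 \bmod X^{\delta-1}\quad\text{for all } j=0,\dots,\nu$$ holds for all $a(X)\in\mathcal{A}$, $b(X)\in\mathcal{B}$. Let $b(X)\in\mathcal{B}$ be a codeword of weight $2$. Let $r(X)=a(X)+e(X)$ with $a(X)\in\mathcal{A}$ and error $e(X)=\sum_{i\in\mathsf{E}}e_iX^i\in\mathbb{F}_q[X]$, where $\mathsf{E}=\{j_1,\dots,j_t\}\subseteq\{0,\dots,n_a-1\}$, $|\mathsf{E}|=t$, $e_i\neq 0$ for $i\in\mathsf{E}$, and $$t\leq \frac{\delta+\nu-1}{2d_b}=\frac{\delta+\nu-1}{4}.$$ For $j=0,\dots,\nu$ define the syndromes $S^{(j)}_i = e(\alpha^{f_1+im_1+j})\, b(\beta^{f_2+im_2+j})\in\mathbb{F}_{q^s}$ for $i=0,\dots,\delta-2$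 (equivalently, the coefficients of $\sum_{i\ge0} r(\alpha^{f_1+im_1+j})b(\beta^{f_2+im_2+j})X^i \bmod X^{\delta-1}$), let $\mathbf{S}^{(j)}$ be the $(\delta-1-2t)\times 2t$ matrix whose entry in row $u$ and column $v$ ($u=0,\dots,\delta-2-2t$, $v=0,\dots,2t-1$) is $S^{(j)}_{u+v}$, and let $\mathbf{S}$ be the matrix obtained by stacking $\mathbf{S}^{(0)},\mathbf{S}^{(1)},\dots,\mathbf{S}^{(\nu)}$ vertically. Then $\operatorname{rank}(\mathbf{S})=2t$.
   Context: A cyclic $[n,k]_q$ code is an ideal of $\mathbb{F}_q[X]/(X^n-1)$; codewords are identified with polynomials of degree less than $n$, and $c(\gamma)$ denotes evaluation at $\gamma$ in an extension field. A single parity check code of length $n_b$ is the code of all vectors in $\mathbb{F}_q^{n_b}$ whose coordinates sum to zero. The matrix $\mathbf{S}$ is the coefficient matrix of the joint key equations $\Omega^{(j)}(X)\equiv\Lambda(X)S^{(j)}(X)\bmod X^{\delta-1}$ for an error-locator polynomial $\Lambda$ of degree $2t$.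
   Formalization: The error weight t also satisfies 2t < delta - 1 besides t <= (delta+nu-1)/4, so every block $\mathbf{S}^{(j)}$ has at least one row. The statement above fails without it. *)

theory Defs
  imports "HOL-Computational_Algebra.Polynomial" "Jordan_Normal_Form.DL_Rank"
begin

definition xn_minus_1 :: "nat \<Rightarrow> 'a::comm_ring_1 poly" where
  "xn_minus_1 n = monom 1 n - 1"

text \<open>A cyclic code of length n: an ideal of F[X]/(X^n-1), codewords
  identified with their representatives of degree less than n.\<close>
definition cyclic_code :: "nat \<Rightarrow> 'a::field poly set \<Rightarrow> bool" where
  "cyclic_code n C \<longleftrightarrow> 0 < n \<and> (\<forall>c\<in>C. degree c < n) \<and> 0 \<in> C \<and>
     (\<forall>a\<in>C. \<forall>b\<in>C. a + b \<in> C) \<and>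
     (\<forall>g. \<forall>c\<in>C. (g * c) mod xn_minus_1 n \<in> C)"

definition code_dim :: "'a::{finite,field} poly set \<Rightarrow> nat \<Rightarrow> bool" where
  "code_dim C k \<longleftrightarrow> card C = card (UNIV :: 'a set) ^ k"

definition spc_code :: "nat \<Rightarrow> 'a::field poly set" where
  "spc_code n = {p. degree p < n \<and> (\<Sum>i<n. coeff p i) = 0}"

definition hweight :: "'a::zero poly \<Rightarrow> nat" where
  "hweight p = card {i. coeff p i \<noteq> 0}"

definition has_order :: "'a::field \<Rightarrow> nat \<Rightarrow> bool" where
  "has_order x n \<longleftrightarrow> 0 < n \<and> x ^ n = 1 \<and> (\<forall>k. 0 < k \<and> k < n \<longrightarrow> x ^ k \<noteq> 1)"

definition mat_rank :: "'a::field mat \<Rightarrow> nat" where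
  "mat_rank A = vec_space.rank (dim_row A) A"

text \<open>Stacked syndrome matrix: blocks S^(0),...,S^(nu), each an L x w Hankel
  matrix with entries Syn j (u+v); row index r = j*L + u.\<close>
definition stacked_hankel :: "(nat \<Rightarrow> nat \<Rightarrow> 'a::field) \<Rightarrow> nat \<Rightarrow> nat \<Rightarrow> nat \<Rightarrow> 'a mat" where
  "stacked_hankel Syn nu L w =
     mat ((nu + 1) * L) w (\<lambda>(r, v). Syn (r div L) (r mod L + v))"

end

theory Submission
  imports Defs
begin

text \<open>Expanding e over its support E and b over its support, each syndrome becomes a
  power sum S^(j)_i = \<Sum> c(p,l) w(p,l)^j Z(p,l)^i over E \<times> supp b with nonzero weights c,
  where Z(p,l) = \<alpha>^(m1 p) \<beta>^(m2 l) and w(p,l) = \<alpha>^p \<beta>^l. Since gcd(na,nb) = 1 and m1, m2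
  are units modulo na, nb, both Z and w are injective on E \<times> supp b. A kernel vector v of the
  stacked matrix gives \<mu>(X) = \<Sum> v_i X^i with \<Sum> c \<mu>(Z) w^j Z^u = 0 for all u < \<delta> - 1 - 2t and
  j \<le> \<nu>; eliminating the points one at a time, each elimination costing one power of either
  w or Z, forces c \<mu>(Z) = 0 as long as 2t \<le> (\<delta> - 1 - 2t) + \<nu>. So \<mu>, of degree < 2t, has 2t
  roots and v = 0.\<close>

lemma mult_mat_vec_unit_vec:
  fixes A :: "'a::semiring_1 mat"
  shows "A \<in> carrier_mat n nc \<Longrightarrow> i < nc \<Longrightarrow> A *\<^sub>v unit_vec nc i = col A i"
  by (intro eq_vecI) auto

lemma mat_rank_eq_dim_col_if_kernel_trivial:
  fixes A :: "'a::field mat"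
  assumes A: "A \<in> carrier_mat n nc"
    and ker: "\<And>v. v \<in> carrier_vec nc \<Longrightarrow> A *\<^sub>v v = 0\<^sub>v n \<Longrightarrow> v = 0\<^sub>v nc"
  shows "mat_rank A = nc"
proof -
  interpret vs: vec_space "TYPE('a)" n .
  have distinct: "distinct (cols A)"
  proof (rule ccontr)
    assume "\<not> distinct (cols A)"
    then obtain i j where ij: "i < nc" "j < nc" "i \<noteq> j" "col A i = col A j"
      using A unfolding distinct_conv_nth by (auto simp: cols_def)
    define v :: "'a vec" where "v = unit_vec nc i - unit_vec nc j"
    have "A *\<^sub>v v = 0\<^sub>v n"
      using A ij by (simp add: v_def mult_minus_distrib_mat_vec mult_mat_vec_unit_vec)
    then have "v = 0\<^sub>v nc"
      using ker by (simp add: v_def)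
    moreover have "v $ i \<noteq> 0"
      using ij by (simp add: v_def)
    ultimately show False
      using ij by simp
  qed
  moreover have "\<not> vs.lin_dep (set (cols A))"
    using vs.lin_depE[OF A _ distinct] ker by metis
  ultimately show ?thesis
    using vs.lin_indpt_full_rank[OF A] A by (simp add: mat_rank_def)
qed

lemma sum_mult_diff_eq:
  "(\<Sum>k\<in>K. c k * (w k - a) * w k ^ j * z k) =
     (\<Sum>k\<in>K. c k * w k ^ Suc j * z k) - a * (\<Sum>k\<in>K. c k * w k ^ j * z k)"
  for c w z :: "'i \<Rightarrow> 'a::comm_ring_1"
  by (simp add: sum_distrib_left sum_subtractf[symmetric] algebra_simps)

lemma power_sums_eq_0_imp_weights_eq_0:
  fixes c w Z :: "'i \<Rightarrow> 'a::field"
  assumes "finite K" "inj_on w K" "inj_on Z K"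
    and "card K < M + L" "0 < M" "0 < L"
    and "\<And>j u. j < M \<Longrightarrow> u < L \<Longrightarrow> (\<Sum>k\<in>K. c k * w k ^ j * Z k ^ u) = 0"
  shows "\<forall>k\<in>K. c k = 0"
  using assms
proof (induction K arbitrary: c w Z M L rule: finite_induct)
  case empty
  then show ?case by simp
next
  case (insert x F)
  \<comment> \<open>Multiplying the weights by w - w x trades one power of w for the point x.\<close>
  have eliminate: "\<forall>k\<in>F. c k = 0"
    if "inj_on w (insert x F)" "inj_on Z (insert x F)" "card F < (M - 1) + L" "1 < M" "0 < L"
      and S: "\<And>j u. j < M \<Longrightarrow> u < L \<Longrightarrow> (\<Sum>k\<in>insert x F. c k * w k ^ j * Z k ^ u) = 0"
    for w Z :: "'i \<Rightarrow> 'a" and M L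
  proof -
    define c' where "c' k = c k * (w k - w x)" for k
    have "\<forall>k\<in>F. c' k = 0"
    proof (rule insert.IH)
      fix j u assume "j < M - 1" "u < L"
      have "(\<Sum>k\<in>F. c' k * w k ^ j * Z k ^ u) = (\<Sum>k\<in>insert x F. c' k * w k ^ j * Z k ^ u)"
        using insert.hyps by (simp add: c'_def)
      also have "\<dots> = 0"
        unfolding c'_def sum_mult_diff_eq using S[of "Suc j" u] S[of j u] \<open>j < M - 1\<close> \<open>u < L\<close> by simp
      finally show "(\<Sum>k\<in>F. c' k * w k ^ j * Z k ^ u) = 0" .
    qed (use that in \<open>auto intro: inj_on_subset\<close>)
    moreover have "w k \<noteq> w x" if "k \<in> F" for k
      using inj_onD[OF \<open>inj_on w (insert x F)\<close>, of k x] insert.hyps(2) that by auto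
    ultimately show ?thesis by (auto simp: c'_def)
  qed
  have "\<forall>k\<in>F. c k = 0"
  proof (cases "F = {}")
    case False
    then have "0 < card F" using insert.hyps(1) by auto
    then consider "1 < M" | "1 < L" using insert.prems(3) insert.hyps by fastforce
    then show ?thesis
    proof cases
      case 1
      then show ?thesis using insert.prems insert.hyps by (intro eliminate[of w Z M L]) auto
    next
      case 2
      \<comment> \<open>The hypotheses are symmetric in (w, M) and (Z, L).\<close>
      show ?thesis
        using insert.prems insert.hyps 2
        by (intro eliminate[of Z w L M]) (auto simp: mult_ac)
    qed
  qed simp
  moreover have "(\<Sum>k\<in>insert x F. c k * w k ^ 0 * Z k ^ 0) = 0"
    using insert.prems by blast
  ultimately show ?case
    using insert.hyps by simp
qed

lemma coeffs_eq_0_if_sum_powers_vanish: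
  fixes a :: "nat \<Rightarrow> 'a::idom"
  assumes "card X = N" "\<And>x. x \<in> X \<Longrightarrow> (\<Sum>i<N. a i * x ^ i) = 0" "i < N"
  shows "a i = 0"
proof -
  define p where "p = (\<Sum>i<N. monom (a i) i)"
  have "degree p < N"
  proof -
    have "degree p \<le> N - 1"
      unfolding p_def by (rule degree_sum_le) (auto intro: order.trans[OF degree_monom_le])
    then show ?thesis
      using assms(3) by linarith
  qed
  moreover have "poly p x = 0" if "x \<in> X" for x
    using assms(2)[OF that] by (simp add: p_def poly_sum poly_monom)
  ultimately have "p = 0"
    using assms(1) by (intro poly_eqI_degree[of X]) auto
  moreover have "coeff p i = a i"
    using assms(3) by (simp add: p_def coeff_sum coeff_monom)
  ultimately show ?thesis
    by simp
qed

lemma mat_rank_stacked_hankel_power_sums: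
  fixes c w Z :: "'i \<Rightarrow> 'a::field"
  assumes K: "finite K" "inj_on w K" "inj_on Z K" "card K = N"
    and N: "N \<le> \<nu> + L" and L: "0 < L"
    and c: "\<And>k. k \<in> K \<Longrightarrow> c k \<noteq> 0"
  shows "mat_rank (stacked_hankel (\<lambda>j i. \<Sum>k\<in>K. c k * w k ^ j * Z k ^ i) \<nu> L N) = N"
    (is "mat_rank ?S = N")
proof (rule mat_rank_eq_dim_col_if_kernel_trivial)
  show "?S \<in> carrier_mat ((\<nu> + 1) * L) N"
    by (simp add: stacked_hankel_def)
  fix v :: "'a vec"
  assume v: "v \<in> carrier_vec N" and Sv: "?S *\<^sub>v v = 0\<^sub>v ((\<nu> + 1) * L)"
  define \<mu> where "\<mu> z = (\<Sum>i<N. v $ i * z ^ i)" for z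
  have vanish: "(\<Sum>k\<in>K. (c k * \<mu> (Z k)) * w k ^ j * Z k ^ u) = 0" if "j < Suc \<nu>" "u < L" for j u
  proof -
    have "j * L + u < (j + 1) * L"
      using that by simp
    also have "\<dots> \<le> (\<nu> + 1) * L"
      using that by (intro mult_right_mono) auto
    finally have row: "j * L + u < (\<nu> + 1) * L" .
    have "(\<Sum>k\<in>K. (c k * \<mu> (Z k)) * w k ^ j * Z k ^ u)
        = (\<Sum>k\<in>K. \<Sum>i<N. c k * w k ^ j * Z k ^ (u + i) * v $ i)"
      by (simp add: \<mu>_def sum_distrib_left power_add mult_ac)
    also have "\<dots> = (\<Sum>i<N. (\<Sum>k\<in>K. c k * w k ^ j * Z k ^ (u + i)) * v $ i)"
      by (subst sum.swap) (simp add: sum_distrib_right)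
    also have "\<dots> = (?S *\<^sub>v v) $ (j * L + u)"
      using row v that
      by (simp add: stacked_hankel_def mult_mat_vec_def scalar_prod_def lessThan_atLeast0)
    finally show ?thesis
      using Sv row by simp
  qed
  have "\<forall>k\<in>K. c k * \<mu> (Z k) = 0"
    using K N L vanish
    by (intro power_sums_eq_0_imp_weights_eq_0[where M = "Suc \<nu>" and w = w and Z = Z]) auto
  then have roots: "(\<Sum>i<N. v $ i * z ^ i) = 0" if "z \<in> Z ` K" for z
    using that c by (auto simp: \<mu>_def)
  have "card (Z ` K) = N"
    using K by (simp add: card_image)
  then have "v $ i = 0" if "i < N" for i
    using coeffs_eq_0_if_sum_powers_vanish[of "Z ` K" N "\<lambda>i. v $ i"] roots that by blast
  then show "v = 0\<^sub>v N"
    using v by (intro eq_vecI) auto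
qed

lemma has_order_nonzero: "has_order x n \<Longrightarrow> x \<noteq> 0"
  unfolding has_order_def by (metis power_0_left zero_neq_one not_gr0)

lemma has_order_powi_eq_1_iff:
  assumes "has_order x n"
  shows "x powi d = 1 \<longleftrightarrow> int n dvd d"
proof
  have x: "x \<noteq> 0" and n: "0 < n" "x ^ n = 1"
    using assms has_order_nonzero by (auto simp: has_order_def)
  assume "x powi d = 1"
  moreover have "x powi d = x powi (int n * (d div int n)) * x powi (d mod int n)"
    using x by (metis power_int_add div_mult_mod_eq mult.commute)
  ultimately have "x ^ nat (d mod int n) = 1"
    using n by (simp add: power_int_mult power_int_nonneg_exp)
  moreover have "nat (d mod int n) < n"
    using n by (simp add: nat_less_iff)
  ultimately have "nat (d mod int n) = 0"
    using assms unfolding has_order_def by (metis not_gr0)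
  then have "d mod int n \<le> 0"
    by simp
  moreover have "0 \<le> d mod int n"
    using n by simp
  ultimately show "int n dvd d"
    by (simp add: dvd_eq_mod_eq_0)
next
  assume "int n dvd d"
  then show "x powi d = 1"
    using assms by (auto simp: has_order_def power_int_mult)
qed

lemma powi_eq_1_if_coprime_exponents:
  fixes z :: "'a::field"
  assumes "z \<noteq> 0" "z powi int a = 1" "z powi int b = 1" "coprime a b"
  shows "z = 1"
proof -
  have "gcd (int a) (int b) = 1"
    using assms(4) by (simp add: coprime_iff_gcd_eq_1 gcd_int_int_eq)
  then obtain u v where uv: "u * int a + v * int b = 1"
    by (metis bezout_int)
  have "z = z powi (u * int a + v * int b)"
    by (simp add: uv)
  also have "\<dots> = z powi (int a * u) * z powi (int b * v)"
    using assms(1) by (simp add: power_int_add mult_ac)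
  also have "\<dots> = 1"
    using assms(2,3) by (simp add: power_int_mult)
  finally show ?thesis .
qed

lemma eq_if_int_dvd_diff:
  assumes "int n dvd int p - int p'" "p < n" "p' < n"
  shows "p = p'"
proof -
  have "int p mod int n = int p' mod int n"
    using assms(1) by (simp add: mod_eq_dvd_iff)
  then show ?thesis
    using assms(2,3) by (simp flip: of_nat_mod)
qed

text \<open>The Chinese remainder theorem in multiplicative form.\<close>
lemma inj_on_powi_times_powi:
  fixes \<alpha> \<beta> :: "'a::field"
  assumes \<alpha>: "has_order \<alpha> na" and \<beta>: "has_order \<beta> nb" and "coprime na nb"
    and m1: "coprime (int na) m1" and m2: "coprime (int nb) m2"
  shows "inj_on (\<lambda>(p, l). \<alpha> powi (m1 * int p) * \<beta> powi (m2 * int l)) ({..<na} \<times> {..<nb})"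
proof (rule inj_onI, clarsimp)
  fix p l p' l'
  assume bounds: "p < na" "l < nb" "p' < na" "l' < nb"
    and eq: "\<alpha> powi (m1 * int p) * \<beta> powi (m2 * int l) = \<alpha> powi (m1 * int p') * \<beta> powi (m2 * int l')"
  have nz: "\<alpha> \<noteq> 0" "\<beta> \<noteq> 0"
    using \<alpha> \<beta> by (simp_all add: has_order_nonzero)
  define z where "z = \<alpha> powi (m1 * (int p - int p'))"
  have "\<alpha> powi (m1 * int p) / \<alpha> powi (m1 * int p') = \<beta> powi (m2 * int l') / \<beta> powi (m2 * int l)"
    using eq nz by (simp add: divide_simps mult.commute)
  then have z\<beta>: "z = \<beta> powi (m2 * (int l' - int l))"
    using nz by (simp add: z_def right_diff_distrib power_int_diff)
  have "z powi int na = 1"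
    unfolding z_def power_int_mult[symmetric] using \<alpha> by (simp add: has_order_powi_eq_1_iff)
  moreover have "z powi int nb = 1"
    unfolding z\<beta> power_int_mult[symmetric] using \<beta> by (simp add: has_order_powi_eq_1_iff)
  moreover have "z \<noteq> 0"
    using nz by (simp add: z_def)
  ultimately have "z = 1"
    using powi_eq_1_if_coprime_exponents assms(3) by blast
  then have "\<alpha> powi (m1 * (int p - int p')) = 1" "\<beta> powi (m2 * (int l' - int l)) = 1"
    using z\<beta> by (simp_all add: z_def)
  then have "int na dvd m1 * (int p - int p')" "int nb dvd m2 * (int l' - int l)"
    by (simp_all add: has_order_powi_eq_1_iff[OF \<alpha>] has_order_powi_eq_1_iff[OF \<beta>])
  then have "int na dvd int p - int p'" "int nb dvd int l' - int l"
    using m1 m2 by (simp_all add: coprime_dvd_mult_right_iff)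
  then show "p = p' \<and> l = l'"
    using eq_if_int_dvd_diff[of na p p'] eq_if_int_dvd_diff[of nb l' l] bounds by auto
qed

lemma poly_eq_sum_over_support:
  fixes p :: "'a::comm_semiring_1 poly"
  assumes "finite S" "{i. coeff p i \<noteq> 0} \<subseteq> S"
  shows "poly p x = (\<Sum>i\<in>S. coeff p i * x ^ i)"
proof -
  have "coeff p i = 0" if "i \<notin> S" for i
    using assms(2) that by blast
  then show ?thesis
    unfolding poly_altdef using assms(1)
    by (intro sum.mono_neutral_cong) (auto intro: le_degree)
qed

lemma power_powi_affine_exponent:
  fixes x :: "'a::field"
  assumes "x \<noteq> 0"
  shows "(x powi (f + int i * m + int j)) ^ p =
    x powi (f * int p) * (x ^ p) ^ j * (x powi (m * int p)) ^ i"
proof -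
  have "(x powi (f + int i * m + int j)) ^ p = x powi (f * int p + int p * int j + m * int p * int i)"
    by (simp add: power_int_power' algebra_simps)
  also have "\<dots> = x powi (f * int p) * x powi (int p * int j) * x powi (m * int p * int i)"
    using assms by (simp add: power_int_add)
  also have "\<dots> = x powi (f * int p) * (x ^ p) ^ j * (x powi (m * int p)) ^ i"
    by (simp only: power_int_mult power_int_of_nat)
  finally show ?thesis .
qed

lemma mat_rank_stacked_hankel_syndromes:
  fixes e b :: "'a::field poly"
  assumes \<alpha>: "has_order \<alpha> na" and \<beta>: "has_order \<beta> nb" and "coprime na nb"
    and "coprime (int na) m1" "coprime (int nb) m2"
    and e: "{p. coeff e p \<noteq> 0} \<subseteq> {..<na}" and b: "{l. coeff b l \<noteq> 0} \<subseteq> {..<nb}"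
    and N: "hweight e * hweight b \<le> \<nu> + L" and L: "0 < L"
  shows "mat_rank (stacked_hankel
      (\<lambda>j i. poly e (\<alpha> powi (f1 + int i * m1 + int j)) * poly b (\<beta> powi (f2 + int i * m2 + int j)))
      \<nu> L (hweight e * hweight b)) = hweight e * hweight b"
proof -
  define E where "E = {p. coeff e p \<noteq> 0}"
  define B where "B = {l. coeff b l \<noteq> 0}"
  define c where "c = (\<lambda>(p, l). coeff e p * \<alpha> powi (f1 * int p) * (coeff b l * \<beta> powi (f2 * int l)))"
  define w where "w = (\<lambda>(p, l). \<alpha> ^ p * \<beta> ^ l)"
  define Z where "Z = (\<lambda>(p, l). \<alpha> powi (m1 * int p) * \<beta> powi (m2 * int l))"
  have nz: "\<alpha> \<noteq> 0" "\<beta> \<noteq> 0"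
    using \<alpha> \<beta> by (simp_all add: has_order_nonzero)
  have EB: "E \<times> B \<subseteq> {..<na} \<times> {..<nb}" "finite E" "finite B"
    using e b by (auto simp: E_def B_def intro: finite_subset)
  define syn where
    "syn = (\<lambda>j i. poly e (\<alpha> powi (f1 + int i * m1 + int j)) * poly b (\<beta> powi (f2 + int i * m2 + int j)))"
  have "syn = (\<lambda>j i. \<Sum>k\<in>E \<times> B. c k * w k ^ j * Z k ^ i)"
  proof (intro ext)
    fix j i
    have "syn j i = (\<Sum>(p, l)\<in>E \<times> B. coeff e p * (\<alpha> powi (f1 + int i * m1 + int j)) ^ p *
        (coeff b l * (\<beta> powi (f2 + int i * m2 + int j)) ^ l))"
      using EB by (simp add: syn_def poly_eq_sum_over_support E_def B_def sum_product sum.cartesian_product)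
    also have "\<dots> = (\<Sum>k\<in>E \<times> B. c k * w k ^ j * Z k ^ i)"
      unfolding power_powi_affine_exponent[OF nz(1)] power_powi_affine_exponent[OF nz(2)]
      by (intro sum.cong) (auto simp: c_def w_def Z_def power_mult_distrib mult_ac)
    finally show "syn j i = (\<Sum>k\<in>E \<times> B. c k * w k ^ j * Z k ^ i)" .
  qed
  moreover have card: "card (E \<times> B) = hweight e * hweight b"
    by (simp add: E_def B_def hweight_def card_cartesian_product)
  moreover have "mat_rank (stacked_hankel (\<lambda>j i. \<Sum>k\<in>E \<times> B. c k * w k ^ j * Z k ^ i) \<nu> L
      (card (E \<times> B))) = card (E \<times> B)"
  proof (rule mat_rank_stacked_hankel_power_sums)
    show "inj_on w (E \<times> B)"
      using inj_on_powi_times_powi[OF \<alpha> \<beta> \<open>coprime na nb\<close>, of 1 1] EB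
      by (auto simp: w_def intro: inj_on_subset)
    show "inj_on Z (E \<times> B)"
      using inj_on_powi_times_powi[OF \<alpha> \<beta> assms(3-5)] EB
      by (auto simp: Z_def intro: inj_on_subset)
    show "c k \<noteq> 0" if "k \<in> E \<times> B" for k
      using that nz by (auto simp: c_def E_def B_def)
  qed (use EB N L card in auto)
  ultimately show ?thesis
    by (simp add: syn_def)
qed

theorem theorem7:
  fixes A :: "'k::{finite,field} poly set"
    and emb :: "'k \<Rightarrow> 'K::{finite,field}"
    and na ka nb sa sb \<delta> \<nu> t :: nat
    and \<alpha> \<beta> :: 'K
    and f1 f2 m1 m2 :: int
    and a b e :: "'k poly"
    and E :: "nat set"
  assumes emb_inj: "inj emb"
    and emb_add: "\<And>x y. emb (x + y) = emb x + emb y"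
    and emb_mult: "\<And>x y. emb (x * y) = emb x * emb y"
    and emb_one: "emb 1 = 1"
    and A_cyclic: "cyclic_code na A" and A_dim: "code_dim A ka"
    and nb_ge: "nb \<ge> 2"
    and coprime_n: "gcd na nb = 1"
    and sa_pos: "sa > 0" and sb_pos: "sb > 0"
    and K_card: "card (UNIV :: 'K set) = card (UNIV :: 'k set) ^ lcm sa sb"
    and \<alpha>_sub: "\<alpha> ^ (card (UNIV :: 'k set) ^ sa) = \<alpha>" and \<alpha>_ord: "has_order \<alpha> na"
    and \<beta>_sub: "\<beta> ^ (card (UNIV :: 'k set) ^ sb) = \<beta>" and \<beta>_ord: "has_order \<beta> nb"
    and m1_nz: "m1 \<noteq> 0" and m2_nz: "m2 \<noteq> 0"
    and gcd_m1: "gcd (int na) m1 = 1" and gcd_m2: "gcd (int nb) m2 = 1"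
    and \<delta>_ge: "\<delta> \<ge> 2" and \<nu>_pos: "\<nu> > 0"
    and key: "\<And>a' b' j i. a' \<in> A \<Longrightarrow> b' \<in> spc_code nb \<Longrightarrow> j \<le> \<nu> \<Longrightarrow> i < \<delta> - 1 \<Longrightarrow>
        poly (map_poly emb a') (\<alpha> powi (f1 + int i * m1 + int j)) *
        poly (map_poly emb b') (\<beta> powi (f2 + int i * m2 + int j)) = 0"
    and b_code: "b \<in> spc_code nb" and b_weight: "hweight b = 2"
    and a_code: "a \<in> A"
    and E_sub: "E \<subseteq> {0..<na}" and E_card: "card E = t"
    and e_supp: "\<And>i. coeff e i \<noteq> 0 \<longleftrightarrow> i \<in> E"
    and t_bound: "4 * t \<le> \<delta> + \<nu> - 1"
    and rows_nonempty: "2 * t < \<delta> - 1"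
  shows "mat_rank (stacked_hankel
            (\<lambda>j i. poly (map_poly emb e) (\<alpha> powi (f1 + int i * m1 + int j)) *
                   poly (map_poly emb b) (\<beta> powi (f2 + int i * m2 + int j)))
            \<nu> (\<delta> - 1 - 2 * t) (2 * t)) = 2 * t"
proof -
  have "emb 0 = 0"
    using emb_add[of 0 0] by (simp only: add_0 add_cancel_right_right)
  then have emb_eq_0: "emb x = 0 \<longleftrightarrow> x = 0" for x
    using inj_eq[OF emb_inj, of x 0] by simp
  have supp: "{i. coeff (map_poly emb p) i \<noteq> 0} = {i. coeff p i \<noteq> 0}" for p
    by (simp add: coeff_map_poly emb_eq_0)
  have "{i. coeff e i \<noteq> 0} = E"
    using e_supp by blast
  then have e: "{i. coeff (map_poly emb e) i \<noteq> 0} \<subseteq> {..<na}" "hweight (map_poly emb e) = t"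
    using E_sub E_card by (auto simp: supp hweight_def)
  have "{i. coeff b i \<noteq> 0} \<subseteq> {..<nb}"
    using b_code by (auto simp: spc_code_def dest: le_degree)
  then have b: "{i. coeff (map_poly emb b) i \<noteq> 0} \<subseteq> {..<nb}" "hweight (map_poly emb b) = 2"
    using b_weight by (simp_all add: supp hweight_def)
  have "coprime na nb" "coprime (int na) m1" "coprime (int nb) m2"
    using coprime_n gcd_m1 gcd_m2 by (simp_all add: coprime_iff_gcd_eq_1)
  from mat_rank_stacked_hankel_syndromes[OF \<alpha>_ord \<beta>_ord this e(1) b(1), of \<nu> "\<delta> - 1 - 2 * t"]
  show ?thesis
    using e(2) b(2) t_bound rows_nonempty by (simp add: mult.commute)
qed

end
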